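(* Let $\mathcal I,\mathcal J$ be ideals on $\omega$ with $\mathcal I\subseteq\mathcal J$. For every cardinal $\kappa$ there exists a Hausdorff compact (hence normal) space $X$ with $|X|=\kappa$ such that for every sequence $(f_n)$ in $\mathcal C(X)$, if $(f_n)$ is $\mathcal I$-pointwise convergent to $0$ then $(f_n)$ is $\mathcal J$-$\sigma$-uniformly convergent to $0$.
   Context: An ideal on $\omega$ is a family $\mathcal I\subseteq\mathcal P(\omega)$ closed under finite unions and subsets, containing all finite sets, with $\omega\notin\mathcal I$. A real sequence $(a_n)$ is $\mathcal I$-convergent to $0$ if $\{n:|a_n|\ge\varepsilon\}\in\mathcal I$ for all $\varepsilon>0$. For a sequence $(f_n)$ of real functions on a set $X$: $\mathcal I$-pointwise convergence to $0$ means $(f_n(x))$ is $\mathcal I$-convergent to $0$ for each $x$; $\mathcal J$-uniform means $\{n:\exists x\in X\,(|f_n(x)|\ge\varepsilon)\}\in\mathcal J$ for each $\varepsilon>0$; $\mathcal J$-$\sigma$-uniform means $X=\bigcup_{k\in\omega}X_k$ with $(f_n\restriction X_k)$ $\mathcal J$-uniformly convergent to $0$ for each $k$. $\mathcal C(X)$ = continuous real functions on $X$. *)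

theory Defs
  imports "HOL-Analysis.Analysis" "HOL-Library.Equipollence"
begin

definition is_ideal :: "nat set set \<Rightarrow> bool" where
  "is_ideal I \<longleftrightarrow>
     (\<forall>A\<in>I. \<forall>B\<in>I. A \<union> B \<in> I) \<and>
     (\<forall>A\<in>I. \<forall>B. B \<subseteq> A \<longrightarrow> B \<in> I) \<and>
     (\<forall>A. finite A \<longrightarrow> A \<in> I) \<and>
     (UNIV :: nat set) \<notin> I"

definition ideal_conv_zero :: "nat set set \<Rightarrow> (nat \<Rightarrow> real) \<Rightarrow> bool" where
  "ideal_conv_zero I a \<longleftrightarrow> (\<forall>\<epsilon>>0. {n. \<bar>a n\<bar> \<ge> \<epsilon>} \<in> I)"

definition ideal_pointwise_zero :: "nat set set \<Rightarrow> 'a set \<Rightarrow> (nat \<Rightarrow> 'a \<Rightarrow> real) \<Rightarrow> bool" where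
  "ideal_pointwise_zero I S f \<longleftrightarrow> (\<forall>x\<in>S. ideal_conv_zero I (\<lambda>n. f n x))"

definition ideal_uniform_zero :: "nat set set \<Rightarrow> 'a set \<Rightarrow> (nat \<Rightarrow> 'a \<Rightarrow> real) \<Rightarrow> bool" where
  "ideal_uniform_zero J S f \<longleftrightarrow> (\<forall>\<epsilon>>0. {n. \<exists>x\<in>S. \<bar>f n x\<bar> \<ge> \<epsilon>} \<in> J)"

definition ideal_sigma_uniform_zero :: "nat set set \<Rightarrow> 'a set \<Rightarrow> (nat \<Rightarrow> 'a \<Rightarrow> real) \<Rightarrow> bool" where
  "ideal_sigma_uniform_zero J S f \<longleftrightarrow>
     (\<exists>Xk :: nat \<Rightarrow> 'a set. S = (\<Union>k. Xk k) \<and> (\<forall>k. ideal_uniform_zero J (Xk k) f))"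

end

theory Submission
  imports Defs
begin

text \<open>
  Take for \<open>X\<close> the set \<open>K\<close> with a distinguished point \<open>p\<close>: every other point is isolated and
  the neighbourhoods of \<open>p\<close> are cofinite (for infinite \<open>K\<close>, the one-point compactification of a
  discrete space). A continuous real function \<open>g\<close> on \<open>X\<close> differs from \<open>g p\<close> only at countably
  many points, since each set \<open>{x. \<bar>g x - g p\<bar> \<ge> \<epsilon>}\<close> is finite. Hence outside a countable set
  \<open>C\<close> every \<open>f n\<close> is constant, so there \<open>\<J>\<close>-uniform convergence is just \<open>\<J>\<close>-convergence at
  \<open>p\<close>, and the countably many points of \<open>C\<close> are covered by singletons.
\<close>

definition alexandroff_topology :: "'a set \<Rightarrow> 'a \<Rightarrow> 'a topology" where
  "alexandroff_topology K p = topology (\<lambda>U. U \<subseteq> K \<and> (p \<in> U \<longrightarrow> finite (K - U)))"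

lemma openin_alexandroff_topology:
  "openin (alexandroff_topology K p) U \<longleftrightarrow> U \<subseteq> K \<and> (p \<in> U \<longrightarrow> finite (K - U))"
proof -
  have "istopology (\<lambda>U. U \<subseteq> K \<and> (p \<in> U \<longrightarrow> finite (K - U)))"
    unfolding istopology_def
  proof (intro conjI allI impI)
    fix \<U> assume \<U>: "\<forall>U\<in>\<U>. U \<subseteq> K \<and> (p \<in> U \<longrightarrow> finite (K - U))" and "p \<in> \<Union>\<U>"
    then obtain U where "U \<in> \<U>" "p \<in> U" by blast
    with \<U> have "finite (K - U)" by blast
    then show "finite (K - \<Union>\<U>)"
      by (rule finite_subset[rotated]) (use \<open>U \<in> \<U>\<close> in blast)
  qed (auto simp: Diff_Int)
  then show ?thesis
    by (simp add: alexandroff_topology_def)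
qed

lemma topspace_alexandroff_topology [simp]: "topspace (alexandroff_topology K p) = K"
proof (rule equalityI)
  show "topspace (alexandroff_topology K p) \<subseteq> K"
    using openin_topspace[of "alexandroff_topology K p", unfolded openin_alexandroff_topology] ..
  show "K \<subseteq> topspace (alexandroff_topology K p)"
    by (rule openin_subset) (simp add: openin_alexandroff_topology)
qed

lemma Hausdorff_space_alexandroff_topology: "Hausdorff_space (alexandroff_topology K p)"
  unfolding Hausdorff_space_def topspace_alexandroff_topology openin_alexandroff_topology
proof (intro allI impI)
  fix x y assume xy: "x \<in> K \<and> y \<in> K \<and> x \<noteq> y"
  show "\<exists>U V. (U \<subseteq> K \<and> (p \<in> U \<longrightarrow> finite (K - U))) \<and> (V \<subseteq> K \<and> (p \<in> V \<longrightarrow> finite (K - V))) \<and>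
                x \<in> U \<and> y \<in> V \<and> disjnt U V"
  proof (cases "y = p")
    case True
    with xy show ?thesis
      by (intro exI[of _ "{x}"] exI[of _ "K - {x}"]) (auto simp: disjnt_def Diff_Diff_Int)
  next
    case False
    with xy show ?thesis
      by (intro exI[of _ "K - {y}"] exI[of _ "{y}"]) (auto simp: disjnt_def Diff_Diff_Int)
  qed
qed

lemma compact_space_alexandroff_topology:
  assumes "p \<in> K"
  shows "compact_space (alexandroff_topology K p)"
  unfolding compact_space_alt topspace_alexandroff_topology openin_alexandroff_topology
proof (intro allI impI)
  fix \<U> assume cover: "(\<forall>U\<in>\<U>. U \<subseteq> K \<and> (p \<in> U \<longrightarrow> finite (K - U))) \<and> K \<subseteq> \<Union>\<U>"
  with assms obtain U0 where U0: "U0 \<in> \<U>" "p \<in> U0" by blast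
  with cover have "finite (K - U0)" by blast
  then obtain \<F> where "finite \<F>" "\<F> \<subseteq> \<U>" "K - U0 \<subseteq> \<Union>\<F>"
    by (rule finite_subset_Union) (use cover in blast)
  with U0 show "\<exists>\<F>. finite \<F> \<and> \<F> \<subseteq> \<U> \<and> K \<subseteq> \<Union>\<F>"
    by (intro exI[of _ "insert U0 \<F>"]) auto
qed

lemma countable_alexandroff_continuous_map_neq:
  assumes g: "continuous_map (alexandroff_topology K p) euclideanreal g" and "p \<in> K"
  shows "countable {x \<in> K. g x \<noteq> g p}"
proof -
  define U where "U m = {x \<in> K. g x \<in> ball (g p) (inverse (real (Suc m)))}" for m
  have finite: "finite (K - U m)" for m
  proof -
    have "openin (alexandroff_topology K p) (U m)"
      using openin_continuous_map_preimage[OF g, of "ball (g p) (inverse (real (Suc m)))"]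
      by (simp add: U_def)
    moreover have "p \<in> U m" using \<open>p \<in> K\<close> by (simp add: U_def)
    ultimately show ?thesis by (simp add: openin_alexandroff_topology)
  qed
  have "{x \<in> K. g x \<noteq> g p} \<subseteq> (\<Union>m. K - U m)"
  proof
    fix x assume "x \<in> {x \<in> K. g x \<noteq> g p}"
    then have "x \<in> K" "dist (g x) (g p) > 0" by auto
    then obtain m where "inverse (real (Suc m)) < dist (g x) (g p)"
      using reals_Archimedean by blast
    with \<open>x \<in> K\<close> have "x \<in> K - U m"
      by (simp add: U_def dist_commute)
    then show "x \<in> (\<Union>m. K - U m)" by blast
  qed
  moreover have "countable (\<Union>m. K - U m)"
    by (intro countable_UN countableI_type countable_finite finite)
  ultimately show ?thesis
    by (rule countable_subset)
qed

lemma ideal_uniform_zero_iff_constant: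
  assumes "p \<in> A" and "\<And>n x. x \<in> A \<Longrightarrow> f n x = f n p"
  shows "ideal_uniform_zero J A f \<longleftrightarrow> ideal_conv_zero J (\<lambda>n. f n p)"
proof -
  have "(\<exists>x\<in>A. \<epsilon> \<le> \<bar>f n x\<bar>) \<longleftrightarrow> \<epsilon> \<le> \<bar>f n p\<bar>" for n \<epsilon>
    using assms by metis
  then show ?thesis
    by (simp add: ideal_uniform_zero_def ideal_conv_zero_def)
qed

lemma ideal_uniform_zero_singleton:
  "ideal_uniform_zero J {x} f \<longleftrightarrow> ideal_conv_zero J (\<lambda>n. f n x)"
  by (rule ideal_uniform_zero_iff_constant) auto

lemma ideal_pointwise_zero_mono:
  "I \<subseteq> J \<Longrightarrow> ideal_pointwise_zero I S f \<Longrightarrow> ideal_pointwise_zero J S f"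
  by (auto simp: ideal_pointwise_zero_def ideal_conv_zero_def)

lemma ideal_sigma_uniform_zero_empty:
  "is_ideal J \<Longrightarrow> ideal_sigma_uniform_zero J {} f"
  unfolding ideal_sigma_uniform_zero_def ideal_uniform_zero_def is_ideal_def
  by (intro exI[of _ "\<lambda>_. {}"]) simp

lemma ideal_sigma_uniform_zero_Un_countable:
  assumes A: "ideal_uniform_zero J A f" and "countable C" and C: "ideal_pointwise_zero J C f"
  shows "ideal_sigma_uniform_zero J (A \<union> C) f"
proof (cases "C = {}")
  case True
  with A show ?thesis
    unfolding ideal_sigma_uniform_zero_def by (intro exI[of _ "\<lambda>_. A"]) simp
next
  case False
  define X where "X = case_nat A (\<lambda>i. {from_nat_into C i})"
  have "(\<Union>k. X k) = A \<union> (\<Union>i. {from_nat_into C i})"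
    by (auto simp: X_def split: nat.splits)
  also have "\<dots> = A \<union> C"
    using range_from_nat_into[OF False \<open>countable C\<close>] by auto
  finally have "A \<union> C = (\<Union>k. X k)" ..
  moreover have "ideal_uniform_zero J (X k) f" for k
  proof (cases k)
    case (Suc i)
    have "from_nat_into C i \<in> C" using from_nat_into[OF False] .
    with C Suc show ?thesis
      by (simp add: X_def ideal_uniform_zero_singleton ideal_pointwise_zero_def)
  qed (simp add: X_def A)
  ultimately show ?thesis
    unfolding ideal_sigma_uniform_zero_def by blast
qed

lemma ideal_sigma_uniform_zero_alexandroff:
  assumes "p \<in> K" and cont: "\<And>n. continuous_map (alexandroff_topology K p) euclideanreal (f n)"
    and pointwise: "ideal_pointwise_zero J K f"
  shows "ideal_sigma_uniform_zero J K f"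
proof -
  define C where "C = (\<Union>n. {x \<in> K. f n x \<noteq> f n p})"
  have "ideal_uniform_zero J (K - C) f"
  proof -
    have "p \<in> K - C"
      using \<open>p \<in> K\<close> by (simp add: C_def)
    moreover have "f n x = f n p" if "x \<in> K - C" for n x
      using that by (simp add: C_def)
    ultimately have "ideal_uniform_zero J (K - C) f \<longleftrightarrow> ideal_conv_zero J (\<lambda>n. f n p)"
      by (rule ideal_uniform_zero_iff_constant)
    then show ?thesis
      using pointwise \<open>p \<in> K\<close> by (simp add: ideal_pointwise_zero_def)
  qed
  moreover have "countable C"
    unfolding C_def
    by (intro countable_UN countableI_type countable_alexandroff_continuous_map_neq cont \<open>p \<in> K\<close>)
  moreover have "ideal_pointwise_zero J C f"
    using pointwise by (auto simp: ideal_pointwise_zero_def C_def)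
  ultimately have "ideal_sigma_uniform_zero J ((K - C) \<union> C) f"
    by (rule ideal_sigma_uniform_zero_Un_countable)
  moreover have "(K - C) \<union> C = K"
    by (auto simp: C_def)
  ultimately show ?thesis
    by simp
qed

theorem theorem6p3:
  fixes I J :: "nat set set" and K :: "'a set"
  assumes "is_ideal I" and "is_ideal J" and "I \<subseteq> J"
  shows "\<exists>X :: 'a topology.
           compact_space X \<and> Hausdorff_space X \<and> topspace X \<approx> K \<and>
           (\<forall>f :: nat \<Rightarrow> 'a \<Rightarrow> real.
              (\<forall>n. continuous_map X euclideanreal (f n)) \<longrightarrow>
              ideal_pointwise_zero I (topspace X) f \<longrightarrow>
              ideal_sigma_uniform_zero J (topspace X) f)"
proof -
  obtain p where p: "K \<noteq> {} \<Longrightarrow> p \<in> K"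
    using some_in_eq by metis
  show ?thesis
  proof (intro exI conjI allI impI)
    show "compact_space (alexandroff_topology K p)"
      using p by (cases "K = {}") (simp add: compact_space_def, simp add: compact_space_alexandroff_topology)
    show "Hausdorff_space (alexandroff_topology K p)"
      by (rule Hausdorff_space_alexandroff_topology)
    show "topspace (alexandroff_topology K p) \<approx> K"
      by simp
  next
    fix f :: "nat \<Rightarrow> 'a \<Rightarrow> real"
    assume cont: "\<forall>n. continuous_map (alexandroff_topology K p) euclideanreal (f n)"
      and "ideal_pointwise_zero I (topspace (alexandroff_topology K p)) f"
    then have pointwise: "ideal_pointwise_zero J K f"
      using ideal_pointwise_zero_mono[OF \<open>I \<subseteq> J\<close>] by simp
    show "ideal_sigma_uniform_zero J (topspace (alexandroff_topology K p)) f"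
    proof (cases "K = {}")
      case True
      then show ?thesis using \<open>is_ideal J\<close> by (simp add: ideal_sigma_uniform_zero_empty)
    next
      case False
      then show ?thesis
        using p cont pointwise by (simp add: ideal_sigma_uniform_zero_alexandroff)
    qed
  qed
qed

end
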